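(* Let $p_1,\dots,p_n\ge0$ with $\sum_ip_i=1$, integers $1\le d_1<d_2<\dots<d_n$ with $\sum_ip_id_i>1$, and let $j=\min\{i:p_i>0\}$. For $\lambda\in(0,1)$ let $\bar F_\lambda$ solve $\bar F'(w)=\lambda\sum_ip_i\bar F(w)^{d_i}-\bar F(w)$, $\bar F(0)=\lambda$, let $\mathbb E[W_\lambda]=\sum_ip_i\int_0^\infty\bar F_\lambda(w)^{d_i}dw$ and $p_\lambda=1-\sum_ip_i\lambda^{d_i}$. Then $$\lim_{\lambda\to0^+}-\frac{\mathbb E[W_\lambda]}{\log(p_\lambda)}=\frac1{d_j}\qquad\text{and}\qquad\lim_{\lambda\to1^-}-\frac{\mathbb E[W_\lambda]}{\log(p_\lambda)}=\frac1{\sum_ip_id_i-1}.$$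
   Context: This is the LL($d_1,\dots,d_n,p_1,\dots,p_n$) policy with exponential(1) job sizes; $p_\lambda$ is the probability that a job is assigned to an idle server. *)

theory Defs
  imports "HOL-Analysis.Analysis"
begin

text \<open>Indices are 0-based: i ranges over {..<n}.\<close>

definition mean_wait :: "nat \<Rightarrow> (nat \<Rightarrow> real) \<Rightarrow> (nat \<Rightarrow> nat) \<Rightarrow> (real \<Rightarrow> real) \<Rightarrow> real" where
  "mean_wait n p d Fbar = (\<Sum>i<n. p i * (LINT w:{0..}|lborel. Fbar w ^ d i))"

definition p_idle :: "nat \<Rightarrow> (nat \<Rightarrow> real) \<Rightarrow> (nat \<Rightarrow> nat) \<Rightarrow> real \<Rightarrow> real" where
  "p_idle n p d l = 1 - (\<Sum>i<n. p i * l ^ d i)"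

definition first_pos :: "nat \<Rightarrow> (nat \<Rightarrow> real) \<Rightarrow> nat" where
  "first_pos n p = Min {i. i < n \<and> p i > 0}"

end

theory Submission
  imports Defs
begin

text \<open>
  With \<open>S(x) = \<Sum>\<^sub>i p\<^sub>i x^d\<^sub>i\<close> the equation reads \<open>F' = \<lambda> S(F) - F\<close>. Comparing \<open>F\<close> with
  exponentials keeps it in \<open>(0,1)\<close> and drives it to \<open>0\<close>, so for every \<open>\<Phi>\<close> the integral of
  \<open>\<Phi>'(F) (F - \<lambda> S(F))\<close> over \<open>[0,\<infinity>)\<close> equals \<open>\<Phi>(\<lambda>) - \<Phi>(0)\<close>.
  With \<open>\<Phi>\<close> an antiderivative of \<open>H(x) = S(x)/x\<close> this gives
  \<open>\<integral> S(F) (1 - \<lambda> H(F)) = \<Sum>\<^sub>i p\<^sub>i \<lambda>^d\<^sub>i / d\<^sub>i\<close>, so \<open>E[W] = \<integral> S(F)\<close> lies between that sum and the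
  sum divided by \<open>1 - \<lambda>\<close>; near \<open>\<lambda> = 0\<close> the \<open>d\<^sub>j\<close>-terms dominate both these sums and
  \<open>-log p\<^sub>\<lambda> \<approx> 1 - p\<^sub>\<lambda>\<close>.
  With \<open>\<Phi> = -log(1 - \<lambda> H)\<close> one gets \<open>\<integral> \<lambda> F H'(F) = log(1 - \<lambda> H(0)) - log p\<^sub>\<lambda>\<close>. Since
  \<open>S(x) - x H'(x) / (\<Sum>\<^sub>i p\<^sub>i d\<^sub>i - 1)\<close> vanishes to first order at \<open>0\<close> and \<open>1\<close>, it is
  \<open>O(x - S(x))\<close>, and \<open>\<integral> F - \<lambda> S(F) = \<lambda>\<close>; hence \<open>E[W]\<close> and \<open>-log p\<^sub>\<lambda> / (\<Sum>\<^sub>i p\<^sub>i d\<^sub>i - 1)\<close>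
  differ by a bounded amount as \<open>\<lambda> \<rightarrow> 1\<close>.
\<close>

lemma set_integral_Ici_FTC_nonneg:
  fixes \<Phi> \<phi> :: "real \<Rightarrow> real"
  assumes deriv: "\<And>x. 0 < x \<Longrightarrow> (\<Phi> has_real_derivative \<phi> x) (at x)"
    and cont: "\<And>x. 0 < x \<Longrightarrow> isCont \<phi> x"
    and nonneg: "\<And>x. 0 < x \<Longrightarrow> 0 \<le> \<phi> x"
    and lim_0: "(\<Phi> \<longlongrightarrow> \<Phi> 0) (at_right 0)"
    and lim_top: "(\<Phi> \<longlongrightarrow> L) at_top"
  shows "set_integrable lborel {0..} \<phi>" "(LINT x:{0..}|lborel. \<phi> x) = L - \<Phi> 0"
proof -
  have Ioi: "einterval (ereal 0) \<infinity> = {0<..}" by (auto simp: einterval_def)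
  have "set_integrable lborel (einterval (ereal 0) \<infinity>) \<phi>"
    "(LBINT x=ereal 0..\<infinity>. \<phi> x) = L - \<Phi> 0"
    by (rule interval_integral_FTC_nonneg[where F=\<Phi>];
        (auto simp: ereal_tendsto_simps intro!: deriv cont nonneg lim_0 lim_top)?)+
  then have integrable: "set_integrable lborel {0<..} \<phi>"
    and integral: "(LINT x:{0<..}|lborel. \<phi> x) = L - \<Phi> 0"
    using Ioi by (simp_all add: interval_integral_Ioi)
  \<comment> \<open>\<open>{0..}\<close> and \<open>{0<..}\<close> differ by a null set\<close>
  show "set_integrable lborel {0..} \<phi>"
    using integrable unfolding set_integrable_def
    by (subst integrable_discrete_difference[where X="{0}" and g="\<lambda>x. indicator {0<..} x *\<^sub>R \<phi> x"])
      (auto simp: indicator_def)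
  have "(LINT x:{0..}|lborel. \<phi> x) = (LINT x:{0<..}|lborel. \<phi> x)"
    unfolding set_lebesgue_integral_def
    by (rule integral_discrete_difference[where X="{0}"]) (auto simp: indicator_def)
  then show "(LINT x:{0..}|lborel. \<phi> x) = L - \<Phi> 0"
    using integral by simp
qed

lemma set_integral_abs_diff_le:
  fixes f g h :: "_ \<Rightarrow> real"
  assumes f: "set_integrable M A f" and g: "set_integrable M A g" and h: "set_integrable M A h"
    and bound: "\<And>x. x \<in> A \<Longrightarrow> \<bar>f x - g x\<bar> \<le> h x"
  shows "\<bar>(LINT x:A|M. f x) - (LINT x:A|M. g x)\<bar> \<le> (LINT x:A|M. h x)"
proof -
  have "(LINT x:A|M. f x) \<le> (LINT x:A|M. g x + h x)"
    using bound by (intro set_integral_mono f set_integral_add(1) g h) (smt (verit))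
  moreover have "(LINT x:A|M. g x - h x) \<le> (LINT x:A|M. f x)"
    using bound by (intro set_integral_mono f set_integral_diff(1) g h) (smt (verit))
  ultimately show ?thesis
    using set_integral_add(2)[OF g h] set_integral_diff(2)[OF g h] by linarith
qed

lemma power_sub_self_bounds:
  fixes x :: real
  assumes "0 \<le> x" "x \<le> 1" "1 \<le> k"
  shows "0 \<le> x - x ^ k" "x - x ^ k \<le> real k * x * (1 - x)"
proof -
  have "x ^ k \<le> x ^ 1"
    using assms by (intro power_decreasing) auto
  then show "0 \<le> x - x ^ k" by simp
  have Bernoulli: "1 + real (k - 1) * (x - 1) \<le> (1 + (x - 1)) ^ (k - 1)"
    using assms by (intro Bernoulli_inequality) auto
  have "x - x ^ k = x * (1 - x ^ (k - 1))"
    using assms by (cases k) (auto simp: algebra_simps)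
  also have "\<dots> \<le> x * (real (k - 1) * (1 - x))"
    using Bernoulli assms by (intro mult_left_mono) (auto simp: algebra_simps)
  also have "\<dots> \<le> x * (real k * (1 - x))"
    using assms by (intro mult_left_mono mult_right_mono) auto
  finally show "x - x ^ k \<le> real k * x * (1 - x)"
    by (simp add: algebra_simps)
qed

lemma abs_mult_power_sub_self_le:
  fixes x :: real
  assumes "0 \<le> x" "x \<le> 1"
  shows "\<bar>real k * (x ^ k - x)\<bar> \<le> real k ^ 2 * (x * (1 - x))"
proof (cases "k = 0")
  case False
  then have "\<bar>x ^ k - x\<bar> \<le> real k * (x * (1 - x))"
    using power_sub_self_bounds[OF assms, of k] by simp
  then have "real k * \<bar>x ^ k - x\<bar> \<le> real k * (real k * (x * (1 - x)))"
    by (rule mult_left_mono) simp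
  then show ?thesis
    by (simp add: abs_mult power2_eq_square)
qed simp

lemma ln_one_minus_bounds:
  fixes s :: real
  assumes "0 \<le> s" "s < 1"
  shows "s \<le> - ln (1 - s)" "- ln (1 - s) \<le> s / (1 - s)"
proof -
  show "s \<le> - ln (1 - s)"
    using ln_le_minus_one[of "1 - s"] assms by simp
  have "ln (inverse (1 - s)) \<le> inverse (1 - s) - 1"
    using assms by (intro ln_le_minus_one) auto
  moreover have "ln (inverse (1 - s)) = - ln (1 - s)"
    by (rule ln_inverse)
  moreover have "inverse (1 - s) - 1 = s / (1 - s)"
    using assms by (simp add: field_simps)
  ultimately show "- ln (1 - s) \<le> s / (1 - s)"
    by simp
qed

lemma first_pos_least:
  fixes p :: "nat \<Rightarrow> real"
  assumes nonneg: "\<And>i. i < n \<Longrightarrow> 0 \<le> p i" and sum: "(\<Sum>i<n. p i) = 1"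
  shows "first_pos n p < n" "0 < p (first_pos n p)"
    and "\<And>i. i < n \<Longrightarrow> 0 < p i \<Longrightarrow> first_pos n p \<le> i"
proof -
  define P where "P = {i. i < n \<and> 0 < p i}"
  have "P \<noteq> {}"
  proof
    assume "P = {}"
    then have "\<And>i. i < n \<Longrightarrow> p i = 0"
      using nonneg unfolding P_def by force
    then show False using sum by simp
  qed
  moreover have "finite P" unfolding P_def by auto
  ultimately have "first_pos n p \<in> P"
    unfolding first_pos_def P_def[symmetric] by (intro Min_in)
  then show "first_pos n p < n" "0 < p (first_pos n p)"
    unfolding P_def by auto
  show "first_pos n p \<le> i" if "i < n" "0 < p i" for i
    using that \<open>finite P\<close> unfolding first_pos_def P_def[symmetric] by (simp add: P_def)
qed

section \<open>Polynomials of the choice distribution\<close>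

locale LL_poly =
  fixes n :: nat and p :: "nat \<Rightarrow> real" and d :: "nat \<Rightarrow> nat"
  assumes p_nonneg: "\<And>i. i < n \<Longrightarrow> p i \<ge> 0"
    and p_sum: "(\<Sum>i<n. p i) = 1"
    and d_pos: "\<And>i. i < n \<Longrightarrow> d i \<ge> 1"
begin

definition S :: "real \<Rightarrow> real" where
  "S x = (\<Sum>i<n. p i * x ^ d i)"

definition H :: "real \<Rightarrow> real" where
  "H x = (\<Sum>i<n. p i * x ^ (d i - 1))"

definition Q :: "real \<Rightarrow> real" where
  "Q x = (\<Sum>i<n. p i * (real (d i - 1) * x ^ (d i - 1)))"

definition A :: "real \<Rightarrow> real" where
  "A x = (\<Sum>i<n. p i / real (d i) * x ^ d i)"

definition d_mean :: real where
  "d_mean = (\<Sum>i<n. p i * real (d i))"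

lemma p_idle_eq: "p_idle n p d x = 1 - S x"
  unfolding p_idle_def S_def ..

lemma power_d_eq: "i < n \<Longrightarrow> x ^ d i = x * x ^ (d i - 1)"
  using d_pos[of i] by (cases "d i") auto

lemma S_eq_mult_H: "S x = x * H x"
  unfolding S_def H_def sum_distrib_left by (intro sum.cong refl) (simp add: power_d_eq)

lemma S_nonneg: "0 \<le> x \<Longrightarrow> 0 \<le> S x"
  unfolding S_def using p_nonneg by (auto intro!: sum_nonneg)

lemma x_sub_S_eq: "x - S x = (\<Sum>i<n. p i * (x - x ^ d i))"
  unfolding S_def using p_sum
  by (simp add: sum_subtractf right_diff_distrib sum_distrib_right[symmetric])

lemma S_le_self:
  assumes "0 \<le> x" "x \<le> 1" shows "S x \<le> x"
proof -
  have "0 \<le> (\<Sum>i<n. p i * (x - x ^ d i))"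
    using power_sub_self_bounds(1)[OF assms d_pos] p_nonneg by (auto intro!: sum_nonneg)
  then show ?thesis using x_sub_S_eq[of x] by linarith
qed

lemma S_pos:
  assumes "0 < x" shows "0 < S x"
proof -
  let ?j = "first_pos n p"
  have "0 < p ?j * x ^ d ?j"
    using first_pos_least(2)[OF p_nonneg p_sum] assms by simp
  also have "\<dots> \<le> S x"
    unfolding S_def using first_pos_least(1)[OF p_nonneg p_sum] p_nonneg assms
    by (intro member_le_sum) auto
  finally show ?thesis .
qed

lemma H_nonneg: "0 \<le> x \<Longrightarrow> 0 \<le> H x"
  unfolding H_def using p_nonneg by (auto intro!: sum_nonneg)

lemma H_le_1:
  assumes "0 \<le> x" "x \<le> 1" shows "H x \<le> 1"
proof -
  have "H x \<le> (\<Sum>i<n. p i * 1)"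
    unfolding H_def using assms p_nonneg by (intro sum_mono mult_left_mono power_le_one) auto
  then show ?thesis using p_sum by simp
qed

lemma Q_nonneg: "0 \<le> x \<Longrightarrow> 0 \<le> Q x"
  unfolding Q_def using p_nonneg by (auto intro!: sum_nonneg)

lemma A_nonneg: "0 \<le> x \<Longrightarrow> 0 \<le> A x"
  unfolding A_def using p_nonneg by (auto intro!: sum_nonneg)

lemma A_0: "A 0 = 0"
  unfolding A_def using d_pos by (intro sum.neutral) (force simp: Suc_le_eq)

lemma continuous_on_S: "continuous_on X S"
  unfolding S_def by (intro continuous_intros)

lemma continuous_on_H: "continuous_on X H"
  unfolding H_def by (intro continuous_intros)

lemma continuous_on_Q: "continuous_on X Q"
  unfolding Q_def by (intro continuous_intros)

lemma continuous_on_A: "continuous_on X A"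
  unfolding A_def using d_pos by (intro continuous_intros) (force simp: Suc_le_eq)

lemma A_has_derivative: "(A has_real_derivative H x) (at x)"
proof -
  have "(A has_real_derivative (\<Sum>i<n. p i / real (d i) * (real (d i) * x ^ (d i - Suc 0)))) (at x)"
    unfolding A_def by (intro DERIV_sum DERIV_cmult DERIV_pow)
  also have "(\<Sum>i<n. p i / real (d i) * (real (d i) * x ^ (d i - Suc 0))) = H x"
    unfolding H_def using d_pos by (intro sum.cong refl) (force simp: Suc_le_eq)
  finally show ?thesis .
qed

lemma H_has_derivative:
  assumes "0 < x" shows "(H has_real_derivative Q x / x) (at x)"
proof -
  have "(H has_real_derivative (\<Sum>i<n. p i * (real (d i - 1) * x ^ (d i - 1 - Suc 0)))) (at x)"
    unfolding H_def by (intro DERIV_sum DERIV_cmult DERIV_pow)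
  also have "(\<Sum>i<n. p i * (real (d i - 1) * x ^ (d i - 1 - Suc 0))) = Q x / x"
    unfolding Q_def sum_divide_distrib
  proof (intro sum.cong refl)
    fix i
    show "p i * (real (d i - 1) * x ^ (d i - 1 - Suc 0)) = p i * (real (d i - 1) * x ^ (d i - 1)) / x"
      using assms by (cases "d i - 1") simp_all
  qed
  finally show ?thesis .
qed

lemma d_mean_sub_1: "d_mean - 1 = (\<Sum>i<n. p i * real (d i - 1))"
proof -
  have "(\<Sum>i<n. p i * real (d i - 1)) = (\<Sum>i<n. p i * real (d i) - p i)"
    using d_pos by (intro sum.cong) (auto simp: of_nat_diff algebra_simps)
  then show ?thesis
    unfolding d_mean_def using p_sum by (simp add: sum_subtractf)
qed

lemma H_0_less_1:
  assumes "1 < d_mean" shows "H 0 < 1"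
proof (rule ccontr)
  assume "\<not> H 0 < 1"
  then have "(\<Sum>i<n. p i * (1 - 0 ^ (d i - 1))) = 0"
    using p_sum H_le_1[of 0] unfolding H_def by (simp add: sum_subtractf right_diff_distrib)
  moreover have "0 \<le> p i * (1 - 0 ^ (d i - 1))" if "i < n" for i :: nat
    using p_nonneg[OF that] by (simp add: power_0_left)
  ultimately have vanish: "p i * (1 - 0 ^ (d i - 1)) = 0" if "i < n" for i
    using that by (subst (asm) sum_nonneg_eq_0_iff) auto
  have "p i * real (d i - 1) = 0" if "i < n" for i
  proof (cases "d i = 1")
    case False
    then show ?thesis
      using vanish[OF that] d_pos[OF that] by (simp add: power_0_left)
  qed simp
  then have "(\<Sum>i<n. p i * real (d i - 1)) = 0"
    by (intro sum.neutral) auto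
  then show False
    using assms d_mean_sub_1 by simp
qed

lemma x_sub_S_le:
  assumes "0 \<le> x" "x \<le> 1" shows "x - S x \<le> d_mean * (x * (1 - x))"
proof -
  have "x - S x \<le> (\<Sum>i<n. p i * (real (d i) * (x * (1 - x))))"
    unfolding x_sub_S_eq using power_sub_self_bounds(2)[OF assms d_pos] p_nonneg
    by (intro sum_mono mult_left_mono) (auto simp: mult.assoc)
  then show ?thesis
    unfolding d_mean_def by (simp add: sum_distrib_right mult.assoc)
qed

lemma x_sub_S_ge:
  assumes "0 \<le> x" "x \<le> 1" shows "(1 - H 0) * (x * (1 - x)) \<le> x - S x"
proof -
  have "p i * ((1 - 0 ^ (d i - 1)) * (x * (1 - x))) \<le> p i * (x - x ^ d i)" if "i < n" for i
  proof (cases "d i = 1")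
    case False
    then have "x ^ d i \<le> x ^ 2"
      using assms d_pos[OF that] by (intro power_decreasing) auto
    then show ?thesis
      using False d_pos[OF that] p_nonneg[OF that]
      by (intro mult_left_mono) (auto simp: power2_eq_square power_0_left algebra_simps)
  qed simp
  then have "(\<Sum>i<n. p i * ((1 - 0 ^ (d i - 1)) * (x * (1 - x)))) \<le> x - S x"
    unfolding x_sub_S_eq by (intro sum_mono) simp
  moreover have "(\<Sum>i<n. p i * ((1 - 0 ^ (d i - 1)) * (x * (1 - x))))
      = (\<Sum>i<n. p i * (1 - 0 ^ (d i - 1))) * (x * (1 - x))"
    by (simp add: sum_distrib_right mult.assoc)
  moreover have "(\<Sum>i<n. p i * (1 - 0 ^ (d i - 1))) = 1 - H 0"
    unfolding H_def using p_sum by (simp add: sum_subtractf right_diff_distrib)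
  ultimately show ?thesis by simp
qed

lemma Q_sub_le:
  assumes "0 \<le> x" "x \<le> 1"
  shows "\<bar>Q x - (d_mean - 1) * x\<bar> \<le> (\<Sum>i<n. p i * real (d i - 1) ^ 2) * (x * (1 - x))"
proof -
  have "Q x - (d_mean - 1) * x = (\<Sum>i<n. p i * (real (d i - 1) * (x ^ (d i - 1) - x)))"
    unfolding Q_def d_mean_sub_1
    by (simp add: sum_distrib_left sum_distrib_right sum_subtractf algebra_simps)
  also have "\<bar>\<dots>\<bar> \<le> (\<Sum>i<n. \<bar>p i * (real (d i - 1) * (x ^ (d i - 1) - x))\<bar>)"
    by (rule sum_abs)
  also have "\<dots> \<le> (\<Sum>i<n. p i * (real (d i - 1) ^ 2 * (x * (1 - x))))"
    using abs_mult_power_sub_self_le[OF assms] p_nonneg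
    by (intro sum_mono) (auto simp: abs_mult intro: mult_left_mono)
  finally show ?thesis
    by (simp add: sum_distrib_right mult.assoc)
qed

lemma S_sub_Q_le:
  assumes "1 < d_mean"
  obtains K where "0 \<le> K" "\<And>x. 0 \<le> x \<Longrightarrow> x \<le> 1 \<Longrightarrow> \<bar>S x - Q x / (d_mean - 1)\<bar> \<le> K * (x - S x)"
proof
  define M where "M = d_mean - 1"
  define V where "V = (\<Sum>i<n. p i * real (d i - 1) ^ 2)"
  have M: "0 < M" using assms M_def by simp
  have \<kappa>: "0 < 1 - H 0" using H_0_less_1[OF assms] by simp
  have "0 \<le> d_mean" "0 \<le> V"
    using assms p_nonneg unfolding V_def by (auto intro!: sum_nonneg)
  then show "0 \<le> (d_mean + V / M) / (1 - H 0)"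
    using M \<kappa> by simp
  fix x :: real assume x: "0 \<le> x" "x \<le> 1"
  have "S x - Q x / M = - ((x - S x) + (Q x - M * x) / M)"
    using M by (simp add: field_simps)
  then have "\<bar>S x - Q x / M\<bar> \<le> \<bar>x - S x\<bar> + \<bar>(Q x - M * x) / M\<bar>"
    by (simp only: abs_minus_cancel abs_triangle_ineq)
  also have "\<dots> = (x - S x) + \<bar>Q x - M * x\<bar> / M"
    using M S_le_self[OF x] by (simp add: abs_divide)
  also have "\<dots> \<le> d_mean * (x * (1 - x)) + V * (x * (1 - x)) / M"
    using x_sub_S_le[OF x] Q_sub_le[OF x] M unfolding M_def V_def
    by (intro add_mono divide_right_mono) auto
  also have "\<dots> = (d_mean + V / M) / (1 - H 0) * ((1 - H 0) * (x * (1 - x)))"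
    using \<kappa> M by (simp add: field_simps)
  also have "\<dots> \<le> (d_mean + V / M) / (1 - H 0) * (x - S x)"
    using x_sub_S_ge[OF x] \<open>0 \<le> d_mean\<close> \<open>0 \<le> V\<close> M \<kappa> by (intro mult_left_mono) auto
  finally show "\<bar>S x - Q x / (d_mean - 1)\<bar> \<le> (d_mean + V / M) / (1 - H 0) * (x - S x)"
    unfolding M_def .
qed

lemma power_sum_div_tendsto:
  fixes c :: "nat \<Rightarrow> real"
  assumes d_mono: "\<And>i k. i < k \<Longrightarrow> k < n \<Longrightarrow> d i < d k"
    and c: "\<And>i. i < n \<Longrightarrow> p i = 0 \<Longrightarrow> c i = 0"
  shows "((\<lambda>x. (\<Sum>i<n. c i * x ^ d i) / x ^ d (first_pos n p)) \<longlongrightarrow> c (first_pos n p)) (at_right 0)"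
proof -
  define j where "j = first_pos n p"
  have j: "j < n"
    using first_pos_least(1)[OF p_nonneg p_sum] unfolding j_def .
  have order: "i = j \<or> d j < d i" if "i < n" "c i \<noteq> 0" for i
  proof -
    have "0 < p i"
      using that c p_nonneg[of i] by force
    then have "j \<le> i"
      using first_pos_least(3)[OF p_nonneg p_sum] that(1) unfolding j_def by blast
    then show ?thesis
      using d_mono[of j i] that(1) by (cases "j = i") auto
  qed
  have "((\<lambda>x. \<Sum>i<n. c i * x ^ (d i - d j)) \<longlongrightarrow> (\<Sum>i<n. c i * 0 ^ (d i - d j))) (at_right 0)"
    by (intro tendsto_intros)
  also have "(\<Sum>i<n. c i * 0 ^ (d i - d j)) = (\<Sum>i<n. if i = j then c j else 0)"
  proof (intro sum.cong refl)
    fix i assume "i \<in> {..<n}"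
    then show "c i * 0 ^ (d i - d j) = (if i = j then c j else 0)"
      using order[of i] by (cases "c i = 0") (auto simp: power_0_left)
  qed
  also have "\<dots> = c j"
    using j by simp
  finally have lim: "((\<lambda>x. \<Sum>i<n. c i * x ^ (d i - d j)) \<longlongrightarrow> c j) (at_right 0)" .
  have "\<forall>\<^sub>F x in at_right 0. (\<Sum>i<n. c i * x ^ (d i - d j)) = (\<Sum>i<n. c i * x ^ d i) / x ^ d j"
    using eventually_at_right_less
  proof eventually_elim
    case (elim x)
    have "c i * x ^ (d i - d j) = c i * x ^ d i / x ^ d j" if "i < n" for i
    proof (cases "c i = 0")
      case False
      then have "d j \<le> d i"
        using order[OF that] by auto
      then show ?thesis
        using elim by (simp add: power_diff)
    qed simp
    then show ?case
      by (simp add: sum_divide_distrib)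
  qed
  from Lim_transform_eventually[OF lim this] show ?thesis
    unfolding j_def .
qed

lemma A_div_S_tendsto:
  assumes d_mono: "\<And>i k. i < k \<Longrightarrow> k < n \<Longrightarrow> d i < d k"
  shows "((\<lambda>x. A x / S x) \<longlongrightarrow> 1 / real (d (first_pos n p))) (at_right 0)"
proof -
  define j where "j = first_pos n p"
  have pj: "0 < p j"
    using first_pos_least(2)[OF p_nonneg p_sum] unfolding j_def .
  have "((\<lambda>x. A x / x ^ d j) \<longlongrightarrow> p j / real (d j)) (at_right 0)"
    unfolding A_def j_def by (rule power_sum_div_tendsto[OF d_mono, of "\<lambda>i. p i / real (d i)"]) auto
  moreover have "((\<lambda>x. S x / x ^ d j) \<longlongrightarrow> p j) (at_right 0)"
    unfolding S_def j_def by (rule power_sum_div_tendsto[OF d_mono])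
  ultimately have "((\<lambda>x. (A x / x ^ d j) / (S x / x ^ d j)) \<longlongrightarrow> (p j / real (d j)) / p j) (at_right 0)"
    by (rule tendsto_divide) (use pj in auto)
  then have lim: "((\<lambda>x. (A x / x ^ d j) / (S x / x ^ d j)) \<longlongrightarrow> 1 / real (d j)) (at_right 0)"
    using pj by simp
  have "\<forall>\<^sub>F x in at_right 0. (A x / x ^ d j) / (S x / x ^ d j) = A x / S x"
    using eventually_at_right_less by eventually_elim simp
  from Lim_transform_eventually[OF lim this] show ?thesis
    unfolding j_def .
qed

lemma ratio_tendsto_at_right_0:
  fixes E :: "real \<Rightarrow> real"
  assumes d_mono: "\<And>i k. i < k \<Longrightarrow> k < n \<Longrightarrow> d i < d k"
    and bounds: "\<And>l. 0 < l \<Longrightarrow> l < 1 \<Longrightarrow> A l \<le> E l \<and> E l \<le> A l / (1 - l)"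
  shows "((\<lambda>l. - E l / ln (p_idle n p d l)) \<longlongrightarrow> 1 / real (d (first_pos n p))) (at_right 0)"
proof -
  let ?r = "1 / real (d (first_pos n p))"
  have "(S \<longlongrightarrow> S 0) (at_right 0)"
    unfolding S_def by (intro tendsto_intros)
  moreover have "S 0 = 0"
    using S_eq_mult_H by simp
  ultimately have S_lim: "(S \<longlongrightarrow> 0) (at_right 0)"
    by simp
  have "((\<lambda>l. A l / S l * (1 - S l)) \<longlongrightarrow> ?r * (1 - 0)) (at_right 0)"
    by (intro tendsto_intros A_div_S_tendsto d_mono S_lim)
  then have lower: "((\<lambda>l. A l / S l * (1 - S l)) \<longlongrightarrow> ?r) (at_right 0)"
    by simp
  have "((\<lambda>l. A l / S l / (1 - l)) \<longlongrightarrow> ?r / (1 - 0)) (at_right 0)"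
    by (intro tendsto_intros A_div_S_tendsto d_mono) auto
  then have upper: "((\<lambda>l. A l / S l / (1 - l)) \<longlongrightarrow> ?r) (at_right 0)"
    by simp
  have bounds_ev: "\<forall>\<^sub>F l in at_right 0. A l / S l * (1 - S l) \<le> - E l / ln (p_idle n p d l) \<and>
                            - E l / ln (p_idle n p d l) \<le> A l / S l / (1 - l)"
  proof (rule eventually_at_rightI[of 0 1])
    fix l :: real assume "l \<in> {0<..<1}"
    then have l: "0 < l" "l < 1" by auto
    define L where "L = - ln (1 - S l)"
    have S: "0 < S l" "S l < 1"
      using S_pos[of l] S_le_self[of l] l by auto
    have L: "S l \<le> L" "L \<le> S l / (1 - S l)"
      unfolding L_def using ln_one_minus_bounds S by simp_all
    have A: "0 \<le> A l" "A l \<le> E l" "E l \<le> A l / (1 - l)"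
      using A_nonneg bounds l by auto
    have "A l / S l * (1 - S l) = A l / (S l / (1 - S l))"
      by simp
    also have "\<dots> \<le> A l / L"
      using L S A by (intro divide_left_mono) auto
    also have "\<dots> \<le> E l / L"
      using L S A by (intro divide_right_mono) auto
    finally have lower: "A l / S l * (1 - S l) \<le> E l / L" .
    have "E l / L \<le> (A l / (1 - l)) / L"
      using L S A by (intro divide_right_mono) auto
    also have "\<dots> \<le> (A l / (1 - l)) / S l"
      using L S A l by (intro divide_left_mono) auto
    also have "\<dots> = A l / S l / (1 - l)"
      by simp
    finally have upper: "E l / L \<le> A l / S l / (1 - l)" .
    have eq: "- E l / ln (p_idle n p d l) = E l / L"
      unfolding L_def p_idle_eq by simp
    show "A l / S l * (1 - S l) \<le> - E l / ln (p_idle n p d l) \<and>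
          - E l / ln (p_idle n p d l) \<le> A l / S l / (1 - l)"
      unfolding eq using lower upper by blast
  qed simp
  show ?thesis
    by (rule tendsto_sandwich[OF _ _ lower upper]) (use bounds_ev in \<open>auto elim: eventually_mono\<close>)
qed

lemma ratio_tendsto_at_left_1:
  fixes E :: "real \<Rightarrow> real"
  assumes mean: "1 < d_mean"
    and bound: "\<And>l. 0 < l \<Longrightarrow> l < 1 \<Longrightarrow>
      \<bar>E l - (ln (1 - l * H 0) - ln (p_idle n p d l)) / (l * (d_mean - 1))\<bar> \<le> C"
  shows "((\<lambda>l. - E l / ln (p_idle n p d l)) \<longlongrightarrow> 1 / (d_mean - 1)) (at_left 1)"
proof -
  define M where "M = d_mean - 1"
  define L where "L l = - ln (p_idle n p d l)" for l
  have M: "0 < M"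
    using mean M_def by simp
  have unit: "\<forall>\<^sub>F l in at_left 1. 0 < l \<and> l < (1::real)"
    by (rule eventually_at_leftI[of 0]) auto
  have idle: "0 < p_idle n p d l" "p_idle n p d l < 1" if "0 < l" "l < 1" for l
    unfolding p_idle_eq using S_pos[of l] S_le_self[of l] that by auto
  then have L_pos: "0 < L l" if "0 < l" "l < 1" for l
    using that unfolding L_def by simp
  have "((\<lambda>l. p_idle n p d l) \<longlongrightarrow> 1 - S 1) (at_left 1)"
    unfolding p_idle_eq S_def by (intro tendsto_intros)
  moreover have "S 1 = 1"
    unfolding S_def using p_sum by simp
  ultimately have "filterlim (\<lambda>l. p_idle n p d l) (at_right 0) (at_left 1)"
    using unit idle by (intro tendsto_imp_filterlim_at_right) (auto elim: eventually_mono)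
  then have "filterlim (\<lambda>l. ln (p_idle n p d l)) at_bot (at_left 1)"
    by (rule filterlim_compose[OF ln_at_0])
  then have "filterlim L at_top (at_left 1)"
    unfolding L_def by (simp add: filterlim_uminus_at_bot)
  then have L_inf: "filterlim L at_infinity (at_left 1)"
    by (rule filterlim_at_top_imp_at_infinity)
  \<comment> \<open>\<open>-E/log p\<^sub>\<lambda> = T\<^sub>1 + T\<^sub>2\<close> with \<open>T\<^sub>1 \<rightarrow> 1/M\<close> and \<open>|T\<^sub>2| \<le> C/L \<rightarrow> 0\<close>\<close>
  define T\<^sub>1 where "T\<^sub>1 l = (ln (1 - l * H 0) / L l + 1) / (l * M)" for l
  define T\<^sub>2 where "T\<^sub>2 l = (E l - (ln (1 - l * H 0) + L l) / (l * M)) / L l" for l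
  have "((\<lambda>l. ln (1 - l * H 0)) \<longlongrightarrow> ln (1 - 1 * H 0)) (at_left 1)"
    using H_0_less_1[OF mean] by (intro tendsto_intros) auto
  then have "(T\<^sub>1 \<longlongrightarrow> (0 + 1) / (1 * M)) (at_left 1)"
    unfolding T\<^sub>1_def using M by (intro tendsto_intros tendsto_divide_0[OF _ L_inf]) auto
  moreover have "(T\<^sub>2 \<longlongrightarrow> 0) (at_left 1)"
  proof (rule Lim_null_comparison)
    show "\<forall>\<^sub>F l in at_left 1. norm (T\<^sub>2 l) \<le> C / L l"
      using unit
    proof eventually_elim
      case (elim l)
      have "\<bar>E l - (ln (1 - l * H 0) + L l) / (l * M)\<bar> \<le> C"
        using bound[of l] elim unfolding L_def M_def by simp
      then show ?case
        unfolding T\<^sub>2_def using L_pos[of l] elim by (simp add: abs_divide divide_right_mono)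
    qed
    show "((\<lambda>l. C / L l) \<longlongrightarrow> 0) (at_left 1)"
      by (rule tendsto_divide_0[OF tendsto_const L_inf])
  qed
  ultimately have "((\<lambda>l. T\<^sub>1 l + T\<^sub>2 l) \<longlongrightarrow> 1 / M) (at_left 1)"
    using tendsto_add by fastforce
  moreover have "\<forall>\<^sub>F l in at_left 1. T\<^sub>1 l + T\<^sub>2 l = - E l / ln (p_idle n p d l)"
    using unit
  proof eventually_elim
    case (elim l)
    then show ?case
      using L_pos[of l] M unfolding T\<^sub>1_def T\<^sub>2_def by (simp add: L_def field_simps)
  qed
  ultimately show ?thesis
    unfolding M_def by (rule Lim_transform_eventually)
qed

end

section \<open>The mean-field equation for a fixed arrival rate\<close>

locale LL_ode = LL_poly +
  fixes l :: real and F :: "real \<Rightarrow> real"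
  assumes l_pos: "0 < l" and l_less_1: "l < 1"
    and F_0: "F 0 = l"
    and F_ode: "\<And>w. 0 \<le> w \<Longrightarrow>
      (F has_real_derivative (l * (\<Sum>i<n. p i * F w ^ d i) - F w)) (at w within {0..})"
begin

lemma F_has_derivative_within:
  "0 \<le> w \<Longrightarrow> (F has_real_derivative l * S (F w) - F w) (at w within {0..})"
  unfolding S_def by (rule F_ode)

lemma continuous_on_F: "continuous_on {0..} F"
  unfolding continuous_on_eq_continuous_within
  using DERIV_continuous[OF F_has_derivative_within] by simp

lemma F_has_derivative:
  assumes "0 < w" shows "(F has_real_derivative l * S (F w) - F w) (at w)"
proof -
  have "(F has_real_derivative l * S (F w) - F w) (at w within {0<..})"
    using assms by (intro has_field_derivative_subset[OF F_has_derivative_within]) auto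
  moreover have "at w within {0<..} = at w"
    using assms by (intro at_within_open) auto
  ultimately show ?thesis by simp
qed

lemma exp_mult_F_ge:
  assumes "0 \<le> w" and unit: "\<And>v. 0 < v \<Longrightarrow> v < w \<Longrightarrow> 0 \<le> F v \<and> F v \<le> 1"
  shows "l \<le> exp w * F w"
proof -
  have "exp 0 * F 0 \<le> exp w * F w"
  proof (rule DERIV_nonneg_imp_increasing_open[OF assms(1)])
    fix v assume v: "0 < v" "v < w"
    have "((\<lambda>v. exp v * F v) has_real_derivative exp v * F v + exp v * (l * S (F v) - F v)) (at v)"
      using F_has_derivative[OF v(1)] by (auto intro!: derivative_eq_intros)
    moreover have "exp v * F v + exp v * (l * S (F v) - F v) = exp v * l * S (F v)"
      by (simp add: algebra_simps)
    moreover have "0 \<le> exp v * l * S (F v)"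
      using S_nonneg unit[OF v] l_pos by simp
    ultimately show "\<exists>y. ((\<lambda>v. exp v * F v) has_real_derivative y) (at v) \<and> 0 \<le> y"
      by metis
  next
    show "continuous_on {0..w} (\<lambda>v. exp v * F v)"
      using continuous_on_F by (auto intro!: continuous_intros elim: continuous_on_subset)
  qed
  then show ?thesis
    using F_0 by simp
qed

lemma exp_mult_F_le:
  assumes "0 \<le> w" and unit: "\<And>v. 0 < v \<Longrightarrow> v < w \<Longrightarrow> 0 \<le> F v \<and> F v \<le> 1"
  shows "exp ((1 - l) * w) * F w \<le> l"
proof -
  let ?G = "\<lambda>v. - (exp ((1 - l) * v) * F v)"
  have "?G 0 \<le> ?G w"
  proof (rule DERIV_nonneg_imp_increasing_open[OF assms(1)])
    fix v assume v: "0 < v" "v < w"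
    have "(?G has_real_derivative
        - (exp ((1 - l) * v) * (1 - l) * F v + exp ((1 - l) * v) * (l * S (F v) - F v))) (at v)"
      using F_has_derivative[OF v(1)] by (auto intro!: derivative_eq_intros)
    moreover have "- (exp ((1 - l) * v) * (1 - l) * F v + exp ((1 - l) * v) * (l * S (F v) - F v))
        = exp ((1 - l) * v) * l * (F v - S (F v))"
      by (simp add: algebra_simps)
    moreover have "0 \<le> exp ((1 - l) * v) * l * (F v - S (F v))"
      using S_le_self unit[OF v] l_pos by simp
    ultimately show "\<exists>y. (?G has_real_derivative y) (at v) \<and> 0 \<le> y"
      by metis
  next
    show "continuous_on {0..w} ?G"
      using continuous_on_F by (auto intro!: continuous_intros elim: continuous_on_subset)
  qed
  then show ?thesis
    using F_0 by simp
qed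

text \<open>At the first time \<open>F\<close> leaves \<open>(0, 1)\<close> the two exponential comparisons above already
  force it back inside.\<close>

lemma F_in_unit_interval:
  assumes "0 \<le> w" shows "0 < F w \<and> F w < 1"
proof (rule ccontr)
  assume outside: "\<not> (0 < F w \<and> F w < 1)"
  define B where "B = {0..w} \<inter> F -` ({..0} \<union> {1..})"
  have "closed B"
    unfolding B_def
    by (intro continuous_closed_preimage continuous_on_subset[OF continuous_on_F]) auto
  moreover have "B \<noteq> {}"
    using assms outside unfolding B_def by auto
  moreover have bdd: "bdd_below B"
    unfolding B_def by (auto intro: bdd_belowI[of _ 0])
  ultimately have "Inf B \<in> B"
    by (intro closed_contains_Inf)
  then obtain w\<^sub>0 where w\<^sub>0: "w\<^sub>0 = Inf B" "0 \<le> w\<^sub>0" "w\<^sub>0 \<le> w" "F w\<^sub>0 \<le> 0 \<or> 1 \<le> F w\<^sub>0"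
    unfolding B_def by auto
  have unit: "0 \<le> F v \<and> F v \<le> 1" if "0 < v" "v < w\<^sub>0" for v
  proof -
    have "v \<notin> B"
      using that cInf_lower[OF _ bdd] w\<^sub>0(1) by force
    then show ?thesis
      using that w\<^sub>0 unfolding B_def by auto
  qed
  have "0 < exp w\<^sub>0 * F w\<^sub>0"
    using exp_mult_F_ge[OF w\<^sub>0(2) unit] l_pos by linarith
  then have pos: "0 < F w\<^sub>0"
    by (simp add: zero_less_mult_iff)
  have "1 * F w\<^sub>0 \<le> exp ((1 - l) * w\<^sub>0) * F w\<^sub>0"
    using pos w\<^sub>0(2) l_less_1 by (intro mult_right_mono) auto
  also have "\<dots> \<le> l"
    using exp_mult_F_le[OF w\<^sub>0(2) unit] .
  finally show False
    using pos w\<^sub>0(4) l_less_1 by linarith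
qed

lemma F_le_exp:
  assumes "0 \<le> w" shows "F w \<le> l * exp (- ((1 - l) * w))"
proof -
  have "exp ((1 - l) * w) * F w \<le> l"
    using exp_mult_F_le[OF assms] F_in_unit_interval by (simp add: less_imp_le)
  then have "F w \<le> l / exp ((1 - l) * w)"
    by (simp add: pos_le_divide_eq mult.commute)
  then show ?thesis
    by (simp add: exp_minus divide_inverse)
qed

lemma F_tendsto_0: "(F \<longlongrightarrow> 0) at_top"
proof (rule tendsto_sandwich[where f="\<lambda>_. 0" and h="\<lambda>w. l * exp (- ((1 - l) * w))"])
  show "\<forall>\<^sub>F w in at_top. 0 \<le> F w"
    using F_in_unit_interval by (auto intro!: eventually_at_top_linorderI[of 0] less_imp_le)
  show "\<forall>\<^sub>F w in at_top. F w \<le> l * exp (- ((1 - l) * w))"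
    using F_le_exp by (auto intro!: eventually_at_top_linorderI[of 0])
  have "filterlim (\<lambda>w. (1 - l) * w) at_top at_top"
    using l_less_1 by (intro filterlim_tendsto_pos_mult_at_top[OF tendsto_const] filterlim_ident) auto
  then have "filterlim (\<lambda>w. - ((1 - l) * w)) at_bot at_top"
    by (simp add: filterlim_uminus_at_top)
  then have "((\<lambda>w. exp (- ((1 - l) * w))) \<longlongrightarrow> 0) at_top"
    by (rule exp_at_bot[THEN filterlim_compose])
  then show "((\<lambda>w. l * exp (- ((1 - l) * w))) \<longlongrightarrow> 0) at_top"
    by (rule tendsto_mult_right_zero)
qed simp

lemma set_integral_comp_F:
  fixes \<Phi> \<Phi>' \<phi> :: "real \<Rightarrow> real"
  assumes deriv: "\<And>x. 0 < x \<Longrightarrow> x < 1 \<Longrightarrow> (\<Phi> has_real_derivative \<Phi>' x) (at x)"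
    and \<phi>_eq: "\<And>x. 0 < x \<Longrightarrow> x < 1 \<Longrightarrow> \<phi> x = \<Phi>' x * (x - l * S x)"
    and \<phi>_nonneg: "\<And>x. 0 < x \<Longrightarrow> x < 1 \<Longrightarrow> 0 \<le> \<phi> x"
    and \<Phi>_cont: "continuous_on {0..1} \<Phi>" and \<phi>_cont: "continuous_on {0..1} \<phi>"
  shows "set_integrable lborel {0..} (\<lambda>w. \<phi> (F w))"
    and "(LINT w:{0..}|lborel. \<phi> (F w)) = \<Phi> l - \<Phi> 0"
proof -
  have F_unit: "0 < F w" "F w < 1" if "0 \<le> w" for w
    using F_in_unit_interval[OF that] by auto
  have isCont_interior: "isCont f x" if "continuous_on {0..1} f" "0 < x" "x < 1" for f :: "real \<Rightarrow> real" and x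
    using continuous_on_interior[OF that(1)] that(2,3) by simp
  have deriv_F: "((\<lambda>w. - \<Phi> (F w)) has_real_derivative \<phi> (F w)) (at w)" if "0 < w" for w
  proof -
    have "(\<Phi> has_real_derivative \<Phi>' (F w)) (at (F w))"
      using deriv F_unit that by simp
    from DERIV_chain2[OF this F_has_derivative[OF that]]
    have "((\<lambda>w. - \<Phi> (F w)) has_real_derivative - (\<Phi>' (F w) * (l * S (F w) - F w))) (at w)"
      by (rule DERIV_minus)
    moreover have "- (\<Phi>' (F w) * (l * S (F w) - F w)) = \<phi> (F w)"
      using \<phi>_eq F_unit that by (simp add: algebra_simps)
    ultimately show ?thesis by simp
  qed
  have cont_F: "isCont (\<lambda>w. \<phi> (F w)) w" if "0 < w" for w
    using F_unit that
    by (intro isCont_o2[OF DERIV_isCont[OF F_has_derivative[OF that]] isCont_interior[OF \<phi>_cont]]) auto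
  have "(F \<longlongrightarrow> F 0) (at_right 0)"
    using continuous_on_F by (auto simp: continuous_on_def intro: tendsto_within_subset)
  then have "((\<lambda>w. \<Phi> (F w)) \<longlongrightarrow> \<Phi> (F 0)) (at_right 0)"
    using F_0 l_pos l_less_1 by (intro isCont_tendsto_compose[OF isCont_interior[OF \<Phi>_cont]]) auto
  then have lim_0: "((\<lambda>w. - \<Phi> (F w)) \<longlongrightarrow> - \<Phi> (F 0)) (at_right 0)"
    by (rule tendsto_minus)
  have "\<forall>\<^sub>F w in at_top. F w \<in> {0..1}"
    using eventually_ge_at_top[of 0] by eventually_elim (use F_unit in \<open>auto intro: less_imp_le\<close>)
  then have "((\<lambda>w. \<Phi> (F w)) \<longlongrightarrow> \<Phi> 0) at_top"
    by (intro continuous_on_tendsto_compose[OF \<Phi>_cont F_tendsto_0]) auto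
  then have lim_top: "((\<lambda>w. - \<Phi> (F w)) \<longlongrightarrow> - \<Phi> 0) at_top"
    by (rule tendsto_minus)
  note FTC = set_integral_Ici_FTC_nonneg[OF deriv_F cont_F _ lim_0 lim_top]
  show "set_integrable lborel {0..} (\<lambda>w. \<phi> (F w))"
    "(LINT w:{0..}|lborel. \<phi> (F w)) = \<Phi> l - \<Phi> 0"
    using FTC \<phi>_nonneg F_unit F_0 by auto
qed

lemma set_integral_F_sub_S:
  shows "set_integrable lborel {0..} (\<lambda>w. F w - l * S (F w))"
    and "(LINT w:{0..}|lborel. F w - l * S (F w)) = l"
proof -
  have nonneg: "0 \<le> x - l * S x" if "0 < x" "x < 1" for x
    using S_nonneg[of x] S_le_self[of x] that l_pos l_less_1
    by (smt (verit) mult_left_le_one_le)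
  have "continuous_on {0..1} (\<lambda>x. x - l * S x)"
    by (intro continuous_intros continuous_on_S)
  note integral = set_integral_comp_F[of "\<lambda>x. x" "\<lambda>_. 1" "\<lambda>x. x - l * S x",
      OF DERIV_ident _ nonneg continuous_on_id this]
  show "set_integrable lborel {0..} (\<lambda>w. F w - l * S (F w))"
    "(LINT w:{0..}|lborel. F w - l * S (F w)) = l"
    using integral by simp_all
qed

lemma set_integral_S_F:
  shows "set_integrable lborel {0..} (\<lambda>w. S (F w) * (1 - l * H (F w)))"
    and "(LINT w:{0..}|lborel. S (F w) * (1 - l * H (F w))) = A l"
proof -
  have eq: "S x * (1 - l * H x) = H x * (x - l * S x)" for x
    unfolding S_eq_mult_H by (simp add: algebra_simps)
  have nonneg: "0 \<le> S x * (1 - l * H x)" if "0 < x" "x < 1" for x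
    using S_nonneg[of x] H_nonneg[of x] H_le_1[of x] that l_pos l_less_1
    by (intro mult_nonneg_nonneg) (auto intro: mult_le_one)
  have "continuous_on {0..1} (\<lambda>x. S x * (1 - l * H x))"
    by (intro continuous_intros continuous_on_S continuous_on_H)
  note integral = set_integral_comp_F[of A H "\<lambda>x. S x * (1 - l * H x)",
      OF A_has_derivative eq nonneg continuous_on_A this]
  show "set_integrable lborel {0..} (\<lambda>w. S (F w) * (1 - l * H (F w)))"
    "(LINT w:{0..}|lborel. S (F w) * (1 - l * H (F w))) = A l"
    using integral A_0 by simp_all
qed

lemma one_sub_l_H_pos:
  assumes "0 \<le> x" "x \<le> 1" shows "0 < 1 - l * H x"
proof -
  have "l * H x \<le> l * 1"
    using H_le_1[OF assms] l_pos by (intro mult_left_mono) auto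
  then show ?thesis
    using l_less_1 by simp
qed

lemma set_integral_Q_F:
  shows "set_integrable lborel {0..} (\<lambda>w. l * Q (F w))"
    and "(LINT w:{0..}|lborel. l * Q (F w)) = ln (1 - l * H 0) - ln (p_idle n p d l)"
proof -
  define \<Phi>' where "\<Phi>' x = - (inverse (1 - l * H x) * (0 - l * (Q x / x)))" for x
  have deriv: "((\<lambda>x. - ln (1 - l * H x)) has_real_derivative \<Phi>' x) (at x)" if "0 < x" "x < 1" for x
  proof -
    have "((\<lambda>x. 1 - l * H x) has_real_derivative 0 - l * (Q x / x)) (at x)"
      using that by (intro DERIV_diff DERIV_const DERIV_cmult H_has_derivative)
    from DERIV_chain2[OF DERIV_ln[OF one_sub_l_H_pos] this]
    show ?thesis
      unfolding \<Phi>'_def using that by (intro DERIV_minus) auto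
  qed
  have eq: "l * Q x = \<Phi>' x * (x - l * S x)" if "0 < x" "x < 1" for x
    using one_sub_l_H_pos[of x] that unfolding \<Phi>'_def S_eq_mult_H
    by (simp add: field_simps)
  have nonneg: "0 \<le> l * Q x" if "0 < x" for x
    using Q_nonneg[of x] l_pos that by simp
  have \<Phi>_cont: "continuous_on {0..1} (\<lambda>x. - ln (1 - l * H x))"
    using one_sub_l_H_pos
    by (intro continuous_intros continuous_on_H) (auto simp: less_imp_neq[symmetric])
  have \<phi>_cont: "continuous_on {0..1} (\<lambda>x. l * Q x)"
    by (intro continuous_intros continuous_on_Q)
  note integral = set_integral_comp_F[of "\<lambda>x. - ln (1 - l * H x)" \<Phi>' "\<lambda>x. l * Q x",
      OF deriv eq nonneg \<Phi>_cont \<phi>_cont]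
  show "set_integrable lborel {0..} (\<lambda>w. l * Q (F w))"
    "(LINT w:{0..}|lborel. l * Q (F w)) = ln (1 - l * H 0) - ln (p_idle n p d l)"
    using integral by (simp_all add: p_idle_eq S_eq_mult_H)
qed

lemma set_integrable_F_power:
  assumes "1 \<le> k" shows "set_integrable lborel {0..} (\<lambda>w. F w ^ k)"
proof (rule set_integrable_bound)
  show "set_integrable lborel {0..} (\<lambda>w. (1 / (1 - l)) * (F w - l * S (F w)))"
    using set_integral_F_sub_S(1) by simp
  have cont: "continuous_on {0..} (\<lambda>w. F w ^ k)"
    by (intro continuous_intros continuous_on_F)
  show "set_borel_measurable lborel {0..} (\<lambda>w. F w ^ k)"
    unfolding set_borel_measurable_def
    using borel_measurable_continuous_on_indicator[OF _ cont] by simp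
  show "AE w in lborel. w \<in> {0..} \<longrightarrow> norm (F w ^ k) \<le> norm ((1 / (1 - l)) * (F w - l * S (F w)))"
  proof (rule AE_I2, rule impI)
    fix w :: real assume "w \<in> {0..}"
    then have F: "0 < F w" "F w < 1"
      using F_in_unit_interval by auto
    have "F w ^ k \<le> F w"
      using F assms power_decreasing[of 1 k "F w"] by simp
    then have "(1 - l) * F w ^ k \<le> (1 - l) * F w"
      using l_less_1 by (intro mult_left_mono) auto
    also have "\<dots> \<le> F w - l * S (F w)"
      using S_le_self[of "F w"] F l_pos by (simp add: algebra_simps)
    finally have "F w ^ k \<le> (1 / (1 - l)) * (F w - l * S (F w))"
      using l_less_1 by (simp add: pos_le_divide_eq mult.commute)
    moreover have "\<bar>F w ^ k\<bar> = F w ^ k"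
      using F by simp
    ultimately show "norm (F w ^ k) \<le> norm ((1 / (1 - l)) * (F w - l * S (F w)))"
      unfolding real_norm_def by linarith
  qed
qed

lemma mean_wait_eq_integral:
  shows "set_integrable lborel {0..} (\<lambda>w. S (F w))"
    and "mean_wait n p d F = (LINT w:{0..}|lborel. S (F w))"
proof -
  have terms: "integrable lborel (\<lambda>w. p i * (indicator {0..} w *\<^sub>R F w ^ d i))" if "i \<in> {..<n}" for i
    using set_integrable_F_power d_pos that unfolding set_integrable_def by auto
  have sum: "(\<lambda>w. indicator {0..} w *\<^sub>R S (F w)) = (\<lambda>w. \<Sum>i<n. p i * (indicator {0..} w *\<^sub>R F w ^ d i))"
    unfolding S_def by (auto simp: sum_distrib_left algebra_simps)
  show "set_integrable lborel {0..} (\<lambda>w. S (F w))"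
    unfolding set_integrable_def sum using terms by auto
  show "mean_wait n p d F = (LINT w:{0..}|lborel. S (F w))"
    unfolding mean_wait_def set_lebesgue_integral_def sum
    by (subst Bochner_Integration.integral_sum[OF terms]) auto
qed

lemma mean_wait_bounds: "A l \<le> mean_wait n p d F \<and> mean_wait n p d F \<le> A l / (1 - l)"
proof -
  note S_F = set_integral_S_F
  have pointwise: "S (F w) * (1 - l * H (F w)) \<le> S (F w)"
    "S (F w) \<le> S (F w) * (1 - l * H (F w)) / (1 - l)" if "w \<in> {0..}" for w
  proof -
    have F: "0 \<le> F w" "F w \<le> 1"
      using that F_in_unit_interval by (auto simp: less_imp_le)
    have lH: "0 \<le> l * H (F w)" "l * H (F w) \<le> l"
      using H_nonneg[OF F(1)] H_le_1[OF F] l_pos by (auto simp: mult_left_le)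
    then show "S (F w) * (1 - l * H (F w)) \<le> S (F w)"
      using S_nonneg[OF F(1)] by (intro mult_left_le) auto
    have "S (F w) * (1 - l) \<le> S (F w) * (1 - l * H (F w))"
      using lH S_nonneg[OF F(1)] by (intro mult_left_mono) auto
    then show "S (F w) \<le> S (F w) * (1 - l * H (F w)) / (1 - l)"
      using l_less_1 by (simp add: pos_le_divide_eq)
  qed
  have "A l \<le> (LINT w:{0..}|lborel. S (F w))"
    unfolding S_F(2)[symmetric] using pointwise(1)
    by (intro set_integral_mono S_F(1) mean_wait_eq_integral(1))
  moreover have "(LINT w:{0..}|lborel. S (F w)) \<le> (LINT w:{0..}|lborel. S (F w) * (1 - l * H (F w)) / (1 - l))"
    using pointwise(2) S_F(1)
    by (intro set_integral_mono mean_wait_eq_integral(1)) (auto simp: set_integrable_divide)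
  ultimately show ?thesis
    using S_F(2) unfolding mean_wait_eq_integral(2) by simp
qed

lemma mean_wait_log_estimate:
  assumes mean: "1 < d_mean"
    and K: "0 \<le> K" "\<And>x. 0 \<le> x \<Longrightarrow> x \<le> 1 \<Longrightarrow> \<bar>S x - Q x / (d_mean - 1)\<bar> \<le> K * (x - S x)"
  shows "\<bar>mean_wait n p d F - (ln (1 - l * H 0) - ln (p_idle n p d l)) / (l * (d_mean - 1))\<bar> \<le> K * l"
proof -
  let ?c = "1 / (l * (d_mean - 1))"
  have bound: "\<bar>(LINT w:{0..}|lborel. S (F w)) - (LINT w:{0..}|lborel. ?c * (l * Q (F w)))\<bar>
      \<le> (LINT w:{0..}|lborel. K * (F w - l * S (F w)))"
  proof (rule set_integral_abs_diff_le)
    fix w :: real assume "w \<in> {0..}"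
    then have F: "0 \<le> F w" "F w \<le> 1"
      using F_in_unit_interval by (auto simp: less_imp_le)
    have "\<bar>S (F w) - ?c * (l * Q (F w))\<bar> \<le> K * (F w - S (F w))"
      using K(2)[OF F] l_pos by simp
    also have "\<dots> \<le> K * (F w - l * S (F w))"
      using S_nonneg[OF F(1)] l_pos l_less_1 K(1) by (intro mult_left_mono) (auto simp: mult_left_le_one_le)
    finally show "\<bar>S (F w) - ?c * (l * Q (F w))\<bar> \<le> K * (F w - l * S (F w))" .
  qed (intro set_integrable_mult_right mean_wait_eq_integral(1) set_integral_Q_F(1)
      set_integral_F_sub_S(1))+
  have Q_integral: "(LINT w:{0..}|lborel. ?c * (l * Q (F w)))
      = (ln (1 - l * H 0) - ln (p_idle n p d l)) / (l * (d_mean - 1))"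
    by (subst set_integral_mult_right, subst set_integral_Q_F(2)) simp
  have F_integral: "(LINT w:{0..}|lborel. K * (F w - l * S (F w))) = K * l"
    by (subst set_integral_mult_right, subst set_integral_F_sub_S(2)) simp
  show ?thesis
    using bound unfolding mean_wait_eq_integral(2) Q_integral F_integral .
qed

end

theorem proposition5p3:
  fixes n :: nat and p :: "nat \<Rightarrow> real" and d :: "nat \<Rightarrow> nat"
    and F :: "real \<Rightarrow> real \<Rightarrow> real"
  assumes p_nonneg: "\<And>i. i < n \<Longrightarrow> p i \<ge> 0"
    and p_sum: "(\<Sum>i<n. p i) = 1"
    and d_pos: "\<And>i. i < n \<Longrightarrow> d i \<ge> 1"
    and d_mono: "\<And>i k. i < k \<Longrightarrow> k < n \<Longrightarrow> d i < d k"
    and mean_gt: "(\<Sum>i<n. p i * real (d i)) > 1"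
    and F_init: "\<And>l. 0 < l \<Longrightarrow> l < 1 \<Longrightarrow> F l 0 = l"
    and F_ode: "\<And>l w. 0 < l \<Longrightarrow> l < 1 \<Longrightarrow> 0 \<le> w \<Longrightarrow>
        (F l has_real_derivative (l * (\<Sum>i<n. p i * F l w ^ d i) - F l w)) (at w within {0..})"
  shows "(((\<lambda>l. - mean_wait n p d (F l) / ln (p_idle n p d l))
            \<longlongrightarrow> 1 / real (d (first_pos n p))) (at_right 0)) \<and>
         (((\<lambda>l. - mean_wait n p d (F l) / ln (p_idle n p d l))
            \<longlongrightarrow> 1 / ((\<Sum>i<n. p i * real (d i)) - 1)) (at_left 1))"
proof -
  interpret LL_poly n p d
    using p_nonneg p_sum d_pos by unfold_locales
  have mean: "1 < d_mean"
    using mean_gt unfolding d_mean_def .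
  obtain K where K: "0 \<le> K" "\<And>x. 0 \<le> x \<Longrightarrow> x \<le> 1 \<Longrightarrow> \<bar>S x - Q x / (d_mean - 1)\<bar> \<le> K * (x - S x)"
    using S_sub_Q_le[OF mean] by blast
  have ode: "LL_ode n p d l (F l)" if "0 < l" "l < 1" for l
    using that p_nonneg p_sum d_pos F_init F_ode by unfold_locales auto
  have "((\<lambda>l. - mean_wait n p d (F l) / ln (p_idle n p d l)) \<longlongrightarrow> 1 / real (d (first_pos n p))) (at_right 0)"
    using d_mono LL_ode.mean_wait_bounds[OF ode] by (intro ratio_tendsto_at_right_0) auto
  moreover have "((\<lambda>l. - mean_wait n p d (F l) / ln (p_idle n p d l)) \<longlongrightarrow> 1 / (d_mean - 1)) (at_left 1)"
  proof (rule ratio_tendsto_at_left_1[OF mean, where C = K])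
    fix l :: real assume l: "0 < l" "l < 1"
    have "\<bar>mean_wait n p d (F l) - (ln (1 - l * H 0) - ln (p_idle n p d l)) / (l * (d_mean - 1))\<bar> \<le> K * l"
      by (rule LL_ode.mean_wait_log_estimate[OF ode[OF l] mean K])
    also have "\<dots> \<le> K"
      using K(1) l by (simp add: mult_left_le)
    finally show "\<bar>mean_wait n p d (F l) - (ln (1 - l * H 0) - ln (p_idle n p d l)) / (l * (d_mean - 1))\<bar> \<le> K" .
  qed
  ultimately show ?thesis
    unfolding d_mean_def by simp
qed

end
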